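(* Let $$A= \begin{pmatrix} 1& -2& 2\\ 2&-1& 2\\ 2&-2& 3 \end{pmatrix},\quad B= \begin{pmatrix} 1& 2& 2\\ 2&1& 2\\ 2&2& 3 \end{pmatrix},\quad C= \begin{pmatrix} -1& 2& 2\\ -2&1& 2\\ -2&2& 3 \end{pmatrix},$$ and let $P=(x,y,z)$ be a primitive Pythagorean triple. Then the triangle in $\mathbb{R}^3$ with vertices $AP^\top$, $BP^\top$, $CP^\top$ has inradius $$r= \frac{2xy\sqrt{17}}{3x+3y+\sqrt{9x^2-16xy+9y^2}}$$ and circumradius $$R=\frac{9\sqrt{9x^2-16xy+9y^2}}{\sqrt{17}}.$$
   Context: A primitive Pythagorean triple is a triple $(x,y,z)$ of positive integers with $x^2+y^2=z^2$, $\gcd(x,y)=1$ and $x$ odd. Triples are regarded as row vectors and $\top$ denotes transpose; $\mathbb{R}^3$ carries the Euclidean metric. *)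

theory Defs
  imports "HOL-Analysis.Analysis"
begin

definition primitive_pythagorean_triple :: "int \<Rightarrow> int \<Rightarrow> int \<Rightarrow> bool" where
  "primitive_pythagorean_triple x y z \<longleftrightarrow>
     x > 0 \<and> y > 0 \<and> z > 0 \<and> x^2 + y^2 = z^2 \<and> gcd x y = 1 \<and> odd x"

definition matA :: "real^3^3" where
  "matA = vector [vector [1, -2, 2], vector [2, -1, 2], vector [2, -2, 3]]"

definition matB :: "real^3^3" where
  "matB = vector [vector [1, 2, 2], vector [2, 1, 2], vector [2, 2, 3]]"

definition matC :: "real^3^3" where
  "matC = vector [vector [-1, 2, 2], vector [-2, 1, 2], vector [-2, 2, 3]]"

definition inradius :: "'a::euclidean_space \<Rightarrow> 'a \<Rightarrow> 'a \<Rightarrow> real" where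
  "inradius a b c = (THE r. \<exists>I\<in>convex hull {a, b, c}.
       infdist I (affine hull {a, b}) = r \<and>
       infdist I (affine hull {b, c}) = r \<and>
       infdist I (affine hull {c, a}) = r)"

definition circumradius :: "'a::euclidean_space \<Rightarrow> 'a \<Rightarrow> 'a \<Rightarrow> real" where
  "circumradius a b c = (THE R. \<exists>c0\<in>affine hull {a, b, c}.
       dist c0 a = R \<and> dist c0 b = R \<and> dist c0 c = R)"

end

theory Submission
  imports Defs
begin

text \<open>Both radii are expressed through the three side lengths and the Gram determinant
  \<open>G = |b - a|\<^sup>2 |c - a|\<^sup>2 - ((b - a) \<bullet> (c - a))\<^sup>2 = (2 \<cdot> area)\<^sup>2\<close> of the triangle: the distance of a
  point with barycentric coordinates \<open>(u, v, w)\<close> from the line \<open>ab\<close> is \<open>w \<surd>G / |ab|\<close>, which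
  gives \<open>r = \<surd>G / perimeter\<close>, and solving the linear equations for the circumcenter gives
  \<open>R = |ab| |bc| |ca| / (2 \<surd>G)\<close>. For the vertices \<open>AP, BP, CP\<close> the edges are
  \<open>BP - AP = 2y (2, 1, 2)\<close> and \<open>CP - BP = -2x (1, 2, 2)\<close>, so the sides are \<open>6y\<close>, \<open>6x\<close> and
  \<open>2 \<surd>(9x\<^sup>2 - 16xy + 9y\<^sup>2)\<close>, and \<open>G = 272 x\<^sup>2 y\<^sup>2\<close>.\<close>

lemma dist_sq_eq_inner: "(dist a b)\<^sup>2 = inner (b - a) (b - a)"
  by (metis dist_commute dist_norm power2_norm_eq_inner)

lemma dist_eq_iff_inner_sq: "0 \<le> r \<Longrightarrow> dist a b = r \<longleftrightarrow> inner (b - a) (b - a) = r\<^sup>2"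
  by (metis dist_sq_eq_inner power2_eq_imp_eq zero_le_dist)

lemma equidistant_iff_inner: "dist q a = dist q b \<longleftrightarrow> 2 * inner (q - a) (b - a) = inner (b - a) (b - a)"
proof -
  have "q - b = (q - a) - (b - a)" by simp
  then have "(dist q b)\<^sup>2 = (dist q a)\<^sup>2 - 2 * inner (q - a) (b - a) + inner (b - a) (b - a)"
    by (simp add: dist_norm power2_norm_eq_inner inner_diff_left inner_diff_right inner_commute
        norm_minus_commute)
  then show ?thesis by (smt (verit) zero_le_dist power2_eq_imp_eq)
qed

lemma affine_hull_3_alt:
  "affine hull {a, b, c} = {a + v *\<^sub>R (b - a) + w *\<^sub>R (c - a) | v w. True}"
proof -
  have "u *\<^sub>R a + v *\<^sub>R b + w *\<^sub>R c = a + v *\<^sub>R (b - a) + w *\<^sub>R (c - a)" if "u + v + w = 1" for u v w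
    using that by (simp add: algebra_simps flip: scaleR_add_left)
  moreover have "a + v *\<^sub>R (b - a) + w *\<^sub>R (c - a) = (1 - v - w) *\<^sub>R a + v *\<^sub>R b + w *\<^sub>R c" for v w
    by (simp add: algebra_simps)
  ultimately show ?thesis unfolding affine_hull_3 by fastforce
qed

definition gram :: "'a::real_inner \<Rightarrow> 'a \<Rightarrow> 'a \<Rightarrow> real" where
  "gram a b c = inner (b - a) (b - a) * inner (c - a) (c - a) - (inner (b - a) (c - a))\<^sup>2"

lemma gram_rotate: "gram a b c = gram b c a"
proof -
  have "c - b = (c - a) - (b - a)" "a - b = - (b - a)" by simp_all
  then show ?thesis
    unfolding gram_def by (simp only:) (simp add: inner_commute power2_eq_square algebra_simps)
qed

lemma gram_pos_imp_distinct: "0 < gram a b c \<Longrightarrow> a \<noteq> b \<and> b \<noteq> c \<and> c \<noteq> a"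
  by (auto simp: gram_def power2_eq_square)

lemma gram_affine_combination:
  assumes "u + v + w = 1"
  shows "gram a b (u *\<^sub>R a + v *\<^sub>R b + w *\<^sub>R c) = w\<^sup>2 * gram a b c"
proof -
  have "u *\<^sub>R a + v *\<^sub>R b + w *\<^sub>R c - a = v *\<^sub>R (b - a) + w *\<^sub>R (c - a)"
    using assms by (simp add: algebra_simps flip: scaleR_add_left)
  then show ?thesis
    unfolding gram_def
    by (simp only:) (simp add: inner_add_left inner_add_right inner_commute power2_eq_square
        algebra_simps)
qed

lemma infdist_affine_hull_2:
  fixes p a b :: "'a::real_inner"
  assumes "a \<noteq> b"
  shows "infdist p (affine hull {a, b}) = sqrt (gram a b p) / dist a b"
proof -
  define e E m where "e = b - a" and "E = inner e e" and "m = inner e (p - a)"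
  have "E > 0" using assms by (simp add: E_def e_def)
  have dist_sq: "(dist p (a + t *\<^sub>R e))\<^sup>2 = gram a b p / E + E * (t - m / E)\<^sup>2" for t
  proof -
    have "p - (a + t *\<^sub>R e) = (p - a) - t *\<^sub>R e" by simp
    then have "(dist p (a + t *\<^sub>R e))\<^sup>2 = inner (p - a) (p - a) - 2 * t * m + t\<^sup>2 * E"
      unfolding dist_norm power2_norm_eq_inner
      by (simp only:) (simp add: m_def E_def inner_commute power2_eq_square algebra_simps)
    then show ?thesis
      using \<open>E > 0\<close> by (simp add: gram_def flip: e_def E_def m_def)
        (simp add: power2_eq_square field_simps)
  qed
  have line_ne: "range (\<lambda>t. a + t *\<^sub>R e) \<noteq> {}" by simp
  have "infdist p (affine hull {a, b}) = dist p (a + (m / E) *\<^sub>R e)"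
    unfolding affine_hull_2_alt e_def[symmetric] infdist_notempty[OF line_ne] image_image
  proof (rule cInf_eq_minimum)
    fix d assume "d \<in> range (\<lambda>t. dist p (a + t *\<^sub>R e))"
    then obtain t where d: "d = dist p (a + t *\<^sub>R e)" by blast
    have "(dist p (a + (m / E) *\<^sub>R e))\<^sup>2 \<le> d\<^sup>2"
      unfolding d dist_sq using \<open>E > 0\<close> by simp
    then show "dist p (a + (m / E) *\<^sub>R e) \<le> d"
      using d power2_le_imp_le zero_le_dist by blast
  qed simp
  also have "\<dots> = sqrt (gram a b p / E)"
    using dist_sq[of "m / E"] by (simp add: real_sqrt_unique)
  also have "\<dots> = sqrt (gram a b p) / dist a b"
    by (simp add: real_sqrt_divide E_def e_def dist_norm norm_minus_commute flip: norm_eq_sqrt_inner)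
  finally show ?thesis .
qed

lemma infdist_affine_hull_2_affine_combination:
  fixes a b c :: "'a::real_inner"
  assumes "a \<noteq> b" "0 \<le> w" "u + v + w = 1"
  shows "infdist (u *\<^sub>R a + v *\<^sub>R b + w *\<^sub>R c) (affine hull {a, b}) =
    w * sqrt (gram a b c) / dist a b"
  using assms by (simp add: infdist_affine_hull_2 gram_affine_combination real_sqrt_mult)

lemma infdist_triangle_sides:
  fixes a b c :: "'a::real_inner"
  assumes "0 < gram a b c" "0 \<le> u" "0 \<le> v" "0 \<le> w" "u + v + w = 1"
  defines "p \<equiv> u *\<^sub>R a + v *\<^sub>R b + w *\<^sub>R c"
  shows "infdist p (affine hull {a, b}) = w * sqrt (gram a b c) / dist a b"
    and "infdist p (affine hull {b, c}) = u * sqrt (gram a b c) / dist b c"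
    and "infdist p (affine hull {c, a}) = v * sqrt (gram a b c) / dist c a"
proof -
  have "a \<noteq> b" "b \<noteq> c" "c \<noteq> a" using gram_pos_imp_distinct[OF assms(1)] by simp_all
  have "p = v *\<^sub>R b + w *\<^sub>R c + u *\<^sub>R a" "p = w *\<^sub>R c + u *\<^sub>R a + v *\<^sub>R b"
    by (simp_all add: p_def algebra_simps)
  then show "infdist p (affine hull {a, b}) = w * sqrt (gram a b c) / dist a b"
    and "infdist p (affine hull {b, c}) = u * sqrt (gram a b c) / dist b c"
    and "infdist p (affine hull {c, a}) = v * sqrt (gram a b c) / dist c a"
    using infdist_affine_hull_2_affine_combination[OF \<open>a \<noteq> b\<close>, of w u v c]
      infdist_affine_hull_2_affine_combination[OF \<open>b \<noteq> c\<close>, of u v w a]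
      infdist_affine_hull_2_affine_combination[OF \<open>c \<noteq> a\<close>, of v w u b]
      assms(2-5) gram_rotate[of a b c] gram_rotate[of b c a]
    by (simp_all add: p_def add_ac)
qed

lemma inradius_eq_gram:
  fixes a b c :: "'a::euclidean_space"
  assumes "0 < gram a b c"
  shows "inradius a b c = sqrt (gram a b c) / (dist a b + dist b c + dist c a)"
proof -
  define h L where "h = sqrt (gram a b c)" and "L = dist a b + dist b c + dist c a"
  have "a \<noteq> b" "b \<noteq> c" "c \<noteq> a" using gram_pos_imp_distinct[OF assms] by simp_all
  then have "L > 0" by (simp add: L_def add_pos_pos)
  have "h > 0" using assms by (simp add: h_def)
  note sides = infdist_triangle_sides[OF assms, folded h_def]
  show ?thesis unfolding inradius_def h_def[symmetric] L_def[symmetric]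
  proof (rule the_equality)
    let ?I = "(dist b c / L) *\<^sub>R a + (dist c a / L) *\<^sub>R b + (dist a b / L) *\<^sub>R c"
    have "dist b c / L + dist c a / L + dist a b / L = L / L"
      by (simp only: add_divide_distrib[symmetric] L_def add_ac)
    then have sum: "dist b c / L + dist c a / L + dist a b / L = 1"
      using \<open>L > 0\<close> by simp
    moreover have "?I \<in> convex hull {a, b, c}"
      unfolding convex_hull_3 using sum \<open>L > 0\<close> by fastforce
    ultimately show "\<exists>I\<in>convex hull {a, b, c}. infdist I (affine hull {a, b}) = h / L \<and>
        infdist I (affine hull {b, c}) = h / L \<and> infdist I (affine hull {c, a}) = h / L"
      using sides[of "dist b c / L" "dist c a / L" "dist a b / L"] \<open>L > 0\<close>
        \<open>a \<noteq> b\<close> \<open>b \<noteq> c\<close> \<open>c \<noteq> a\<close>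
      by (intro bexI[of _ ?I]) simp_all
  next
    fix r assume "\<exists>I\<in>convex hull {a, b, c}. infdist I (affine hull {a, b}) = r \<and>
        infdist I (affine hull {b, c}) = r \<and> infdist I (affine hull {c, a}) = r"
    then obtain u v w where uvw: "0 \<le> u" "0 \<le> v" "0 \<le> w" "u + v + w = 1"
      and r: "infdist (u *\<^sub>R a + v *\<^sub>R b + w *\<^sub>R c) (affine hull {a, b}) = r"
        "infdist (u *\<^sub>R a + v *\<^sub>R b + w *\<^sub>R c) (affine hull {b, c}) = r"
        "infdist (u *\<^sub>R a + v *\<^sub>R b + w *\<^sub>R c) (affine hull {c, a}) = r"
      unfolding convex_hull_3 by blast
    have "u = r * dist b c / h" "v = r * dist c a / h" "w = r * dist a b / h"
      using sides[OF uvw] r \<open>h > 0\<close> \<open>a \<noteq> b\<close> \<open>b \<noteq> c\<close> \<open>c \<noteq> a\<close> by (auto simp: field_simps)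
    with \<open>u + v + w = 1\<close> have "r * L = h"
      using \<open>h > 0\<close> by (simp add: L_def field_simps)
    then show "r = h / L" using \<open>L > 0\<close> by (simp add: field_simps)
  qed
qed

lemma equidistant_from_vertices_iff:
  fixes a b c :: "'a::real_inner"
  defines "E \<equiv> inner (b - a) (b - a)" and "M \<equiv> inner (b - a) (c - a)"
    and "F \<equiv> inner (c - a) (c - a)" and "G \<equiv> gram a b c"
  assumes "G \<noteq> 0" and q: "q = a + v *\<^sub>R (b - a) + w *\<^sub>R (c - a)"
  shows "dist q a = dist q b \<and> dist q a = dist q c \<longleftrightarrow>
    v = F * (E - M) / (2 * G) \<and> w = E * (F - M) / (2 * G)"
proof -
  have coord: "inner (v *\<^sub>R (b - a) + w *\<^sub>R (c - a)) (b - a) = v * E + w * M"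
    "inner (v *\<^sub>R (b - a) + w *\<^sub>R (c - a)) (c - a) = v * M + w * F"
    by (simp_all add: inner_add_left E_def M_def F_def inner_commute[of "c - a" "b - a"])
  have G: "G = E * F - M\<^sup>2" by (simp add: gram_def E_def M_def F_def G_def)
  have cramer: "2 * v * G = F * (2 * (v * E + w * M)) - M * (2 * (v * M + w * F))"
    "2 * w * G = E * (2 * (v * M + w * F)) - M * (2 * (v * E + w * M))"
    by (simp_all add: G power2_eq_square algebra_simps)
  have recombine: "G * (2 * (v * E + w * M)) = E * (2 * v * G) + M * (2 * w * G)"
    "G * (2 * (v * M + w * F)) = M * (2 * v * G) + F * (2 * w * G)"
    by (simp_all add: algebra_simps)
  have "dist q a = dist q b \<and> dist q a = dist q c \<longleftrightarrow>
      2 * (v * E + w * M) = E \<and> 2 * (v * M + w * F) = F"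
    by (simp add: q equidistant_iff_inner coord flip: E_def F_def)
  also have "\<dots> \<longleftrightarrow> 2 * v * G = F * (E - M) \<and> 2 * w * G = E * (F - M)"
  proof
    assume "2 * (v * E + w * M) = E \<and> 2 * (v * M + w * F) = F"
    then show "2 * v * G = F * (E - M) \<and> 2 * w * G = E * (F - M)"
      unfolding cramer by (simp add: algebra_simps)
  next
    assume "2 * v * G = F * (E - M) \<and> 2 * w * G = E * (F - M)"
    then have "G * (2 * (v * E + w * M)) = G * E \<and> G * (2 * (v * M + w * F)) = G * F"
      unfolding recombine by (simp only:) (simp add: G power2_eq_square algebra_simps)
    then show "2 * (v * E + w * M) = E \<and> 2 * (v * M + w * F) = F"
      using \<open>G \<noteq> 0\<close> by simp
  qed
  also have "\<dots> \<longleftrightarrow> v = F * (E - M) / (2 * G) \<and> w = E * (F - M) / (2 * G)"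
    using \<open>G \<noteq> 0\<close> by (simp add: field_simps)
  finally show ?thesis .
qed

lemma circumcenter_iff:
  fixes a b c :: "'a::real_inner"
  defines "E \<equiv> inner (b - a) (b - a)" and "M \<equiv> inner (b - a) (c - a)"
    and "F \<equiv> inner (c - a) (c - a)" and "G \<equiv> gram a b c"
  assumes "G \<noteq> 0"
  shows "q \<in> affine hull {a, b, c} \<and> dist q a = dist q b \<and> dist q a = dist q c \<longleftrightarrow>
    q = a + (F * (E - M) / (2 * G)) *\<^sub>R (b - a) + (E * (F - M) / (2 * G)) *\<^sub>R (c - a)"
  using equidistant_from_vertices_iff[OF assms(5)[unfolded G_def], of q]
  unfolding affine_hull_3_alt E_def M_def F_def G_def by blast

lemma circumradius_eq_gram:
  fixes a b c :: "'a::euclidean_space"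
  assumes "0 < gram a b c"
  shows "circumradius a b c = dist a b * dist b c * dist c a / (2 * sqrt (gram a b c))"
proof -
  define E M F G where "E = inner (b - a) (b - a)" and "M = inner (b - a) (c - a)"
    and "F = inner (c - a) (c - a)" and "G = gram a b c"
  define v0 w0 where "v0 = F * (E - M) / (2 * G)" and "w0 = E * (F - M) / (2 * G)"
  define q0 where "q0 = a + v0 *\<^sub>R (b - a) + w0 *\<^sub>R (c - a)"
  have "G > 0" using assms by (simp add: G_def)
  note circumcenter = circumcenter_iff[of a b c, folded E_def M_def F_def G_def,
      folded v0_def w0_def, folded q0_def]
  have "q0 - a = v0 *\<^sub>R (b - a) + w0 *\<^sub>R (c - a)" by (simp add: q0_def)
  then have "(dist q0 a)\<^sup>2 = v0\<^sup>2 * E + 2 * v0 * w0 * M + w0\<^sup>2 * F"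
    unfolding dist_norm power2_norm_eq_inner
    by (simp only:) (simp add: inner_add_left inner_add_right E_def M_def F_def inner_commute
        power2_eq_square algebra_simps)
  also have "\<dots> = E * F * (F * (E - M)\<^sup>2 + 2 * M * (E - M) * (F - M) + E * (F - M)\<^sup>2) / (4 * G\<^sup>2)"
    using \<open>G > 0\<close> unfolding v0_def w0_def by (simp add: power2_eq_square field_simps)
  also have "F * (E - M)\<^sup>2 + 2 * M * (E - M) * (F - M) + E * (F - M)\<^sup>2 = G * (E + F - 2 * M)"
    by (simp add: G_def gram_def E_def M_def F_def power2_eq_square algebra_simps)
  also have "E * F * (G * (E + F - 2 * M)) / (4 * G\<^sup>2) = E * F * (E + F - 2 * M) / (4 * G)"
    using \<open>G > 0\<close> by (simp add: power2_eq_square)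
  also have "\<dots> = (dist a b * dist b c * dist c a / (2 * sqrt G))\<^sup>2"
  proof -
    have "c - b = (c - a) - (b - a)" by simp
    then have "(dist b c)\<^sup>2 = E + F - 2 * M"
      unfolding dist_sq_eq_inner E_def F_def M_def
      by (simp only:) (simp add: inner_commute algebra_simps)
    moreover have "(dist a b)\<^sup>2 = E" "(dist c a)\<^sup>2 = F"
      by (simp_all add: dist_sq_eq_inner E_def F_def dist_commute[of c a])
    ultimately show ?thesis
      using \<open>G > 0\<close> by (simp add: power_divide power_mult_distrib)
  qed
  finally have radius: "dist q0 a = dist a b * dist b c * dist c a / (2 * sqrt G)"
    by (rule power2_eq_imp_eq) (simp_all add: \<open>G > 0\<close> less_imp_le)
  have "q0 \<in> affine hull {a, b, c} \<and> dist q0 a = dist q0 b \<and> dist q0 a = dist q0 c"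
    using circumcenter \<open>G > 0\<close> by blast
  then show ?thesis
    unfolding circumradius_def G_def[symmetric]
  proof (intro the_equality)
    fix R assume "\<exists>q\<in>affine hull {a, b, c}. dist q a = R \<and> dist q b = R \<and> dist q c = R"
    then obtain q where "q \<in> affine hull {a, b, c}" "dist q a = R" "dist q b = R" "dist q c = R"
      by blast
    with circumcenter[of q] \<open>G > 0\<close> radius
    show "R = dist a b * dist b c * dist c a / (2 * sqrt G)" by auto
  qed (use radius in metis)
qed

lemma inner_vector_3:
  "inner (vector [x1, x2, x3] :: real^3) (vector [y1, y2, y3]) = x1 * y1 + x2 * y2 + x3 * y3"
  by (simp add: inner_vec_def sum_3)

lemma matABC_edges:
  fixes P :: "real^3"
  shows "matB *v P - matA *v P = (2 * P$2) *\<^sub>R vector [2, 1, 2]"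
    and "matC *v P - matB *v P = (- 2 * P$1) *\<^sub>R vector [1, 2, 2]"
  by (simp_all add: vec_eq_iff forall_3 matA_def matB_def matC_def matrix_vector_mult_def sum_3)

lemma matABC_triangle:
  fixes X Y Z :: real
  assumes "0 < X" "0 < Y"
  defines "P \<equiv> vector [X, Y, Z] :: real^3"
  shows "dist (matA *v P) (matB *v P) = 6 * Y"
    and "dist (matB *v P) (matC *v P) = 6 * X"
    and "dist (matC *v P) (matA *v P) = 2 * sqrt (9 * X\<^sup>2 - 16 * X * Y + 9 * Y\<^sup>2)"
    and "gram (matA *v P) (matB *v P) (matC *v P) = 272 * (X * Y)\<^sup>2"
proof -
  define a b c where "a = matA *v P" and "b = matB *v P" and "c = matC *v P"
  define u1 u2 :: "real^3" where "u1 = vector [2, 1, 2]" and "u2 = vector [1, 2, 2]"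
  define D where "D = 9 * X\<^sup>2 - 16 * X * Y + 9 * Y\<^sup>2"
  have ba: "b - a = (2 * Y) *\<^sub>R u1" and cb: "c - b = (- 2 * X) *\<^sub>R u2"
    using matABC_edges[of P] by (simp_all add: a_def b_def c_def u1_def u2_def P_def)
  have u: "inner u1 u1 = 9" "inner u2 u2 = 9" "inner u2 u1 = 8"
    by (simp_all add: u1_def u2_def inner_vector_3)
  show "dist a b = 6 * Y"
    using \<open>0 < Y\<close> u by (simp add: dist_eq_iff_inner_sq ba power2_eq_square)
  show "dist b c = 6 * X"
    using \<open>0 < X\<close> u by (simp add: dist_eq_iff_inner_sq cb power2_eq_square)
  have "a - c = - ((b - a) + (c - b))" by simp
  also have "\<dots> = - ((2 * Y) *\<^sub>R u1 + (- 2 * X) *\<^sub>R u2)" by (simp only: ba cb)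
  finally have ac: "a - c = - ((2 * Y) *\<^sub>R u1 + (- 2 * X) *\<^sub>R u2)" .
  have "inner (a - c) (a - c) = 4 * D"
    unfolding ac by (simp add: inner_add_left inner_add_right u inner_commute[of u1 u2] D_def
        power2_eq_square algebra_simps)
  moreover have "D > 0"
  proof -
    have "D = 9 * (X - Y)\<^sup>2 + 2 * X * Y" by (simp add: D_def power2_eq_square algebra_simps)
    then show ?thesis using assms(1,2) by (simp add: add_nonneg_pos)
  qed
  ultimately show "dist c a = 2 * sqrt D"
    by (simp add: dist_eq_iff_inner_sq power_mult_distrib)
  have "a - b = - (b - a)" by simp
  also have "\<dots> = (- 2 * Y) *\<^sub>R u1" by (simp add: ba)
  finally have ab: "a - b = (- 2 * Y) *\<^sub>R u1" .
  show "gram a b c = 272 * (X * Y)\<^sup>2"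
    unfolding gram_rotate[of a b c] unfolding gram_def cb ab
    by (simp add: u inner_commute[of u1 u2] power2_eq_square algebra_simps)
qed

theorem mainTheorem14:
  fixes x y z :: int
  assumes "primitive_pythagorean_triple x y z"
  defines "P \<equiv> vector [real_of_int x, real_of_int y, real_of_int z] :: real^3"
  shows "inradius (matA *v P) (matB *v P) (matC *v P) =
           2 * x * y * sqrt 17 / (3 * x + 3 * y + sqrt (9 * x^2 - 16 * x * y + 9 * y^2)) \<and>
         circumradius (matA *v P) (matB *v P) (matC *v P) =
           9 * sqrt (9 * x^2 - 16 * x * y + 9 * y^2) / sqrt 17"
proof -
  define X Y D where "X = real_of_int x" and "Y = real_of_int y"
    and "D = 9 * X\<^sup>2 - 16 * X * Y + 9 * Y\<^sup>2"
  define a b c where "a = matA *v P" and "b = matB *v P" and "c = matC *v P"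
  have "0 < X" "0 < Y"
    using assms(1) by (auto simp: primitive_pythagorean_triple_def X_def Y_def)
  have "P = vector [X, Y, real_of_int z]" by (simp add: P_def X_def Y_def)
  note triangle = matABC_triangle[OF \<open>0 < X\<close> \<open>0 < Y\<close>, of "real_of_int z", folded this,
      folded a_def b_def c_def D_def]
  have "0 < gram a b c"
    using \<open>0 < X\<close> \<open>0 < Y\<close> by (simp add: triangle)
  have "gram a b c = (4 * sqrt 17 * X * Y)\<^sup>2"
    by (simp add: triangle power_mult_distrib)
  then have sqrt_gram: "sqrt (gram a b c) = 4 * sqrt 17 * X * Y"
    using \<open>0 < X\<close> \<open>0 < Y\<close> by simp
  have "inradius a b c = 4 * sqrt 17 * X * Y / (6 * Y + 6 * X + 2 * sqrt D)"
    using inradius_eq_gram[OF \<open>0 < gram a b c\<close>] by (simp add: sqrt_gram triangle(1-3))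
  also have "\<dots> = (2 * (2 * X * Y * sqrt 17)) / (2 * (3 * X + 3 * Y + sqrt D))"
    by (simp add: algebra_simps)
  also have "\<dots> = 2 * X * Y * sqrt 17 / (3 * X + 3 * Y + sqrt D)"
    by (rule mult_divide_mult_cancel_left) simp
  finally have "inradius a b c = 2 * X * Y * sqrt 17 / (3 * X + 3 * Y + sqrt D)" .
  moreover have "circumradius a b c = 9 * sqrt D / sqrt 17"
    using circumradius_eq_gram[OF \<open>0 < gram a b c\<close>] \<open>0 < X\<close> \<open>0 < Y\<close>
    by (simp add: sqrt_gram triangle(1-3) field_simps)
  ultimately show ?thesis by (simp add: a_def b_def c_def D_def X_def Y_def)
qed

end
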